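(* Let $n\ge4$ and let $\lambda=(a_1,\dots,a_n)$ (usual coordinates) be a dominant weight of $SL(n)$ such that all $a_i\notin\mathbb Z$ and $|a_i|>1$ for some $i$. If $M(\lambda)$ contains no point three of whose coordinates equal $\alpha+1,\alpha,\alpha-1$ for some $\alpha\in\mathbb R$, then $$\lambda=\Big(\tfrac{2n-2}{n},-\tfrac2n,\dots,-\tfrac2n\Big)\quad\text{or}\quad \lambda=\Big(\tfrac2n,\dots,\tfrac2n,-\tfrac{2n-2}{n}\Big).$$
   Context: Setup for $SL(n)$: $\varepsilon_1,\dots,\varepsilon_n$ is the standard basis of $\mathbb Q^n$, $e_i=\varepsilon_i-\frac1n(1,\dots,1)$; the character lattice $\mathfrak X(T)$ of the diagonal torus is identified with the $\mathbb Z$-span of $e_1,\dots,e_n$ inside $\{y\in\mathbb Q^n:\sum y_i=0\}$ (the $y_i$ are the "usual coordinates"). $W=S_n$ acts by permuting coordinates. A weight is dominant if $y_1\ge y_2\ge\dots\ge y_n$. The root lattice is $\Phi=\{\sum a_ie_i\mid a_i\in\mathbb Z,\ \sum a_i\equiv0\pmod n\}$. For a dominant weight $\lambda$, $M(\lambda)=\mathrm{conv}\{w\lambda\mid w\in W\}\cap(\lambda+\Phi)$. *)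

theory Defs
  imports "HOL-Analysis.Analysis"
begin

(* Vectors in Q^n (here R^n) are modelled as functions nat => real, coordinates
   0..n-1 (the paper's 1..n), and value 0 outside {..<n}. *)

definition e_vec :: "nat \<Rightarrow> nat \<Rightarrow> nat \<Rightarrow> real" where
  "e_vec n j = (\<lambda>i. if i < n then (if i = j then 1 else 0) - 1 / real n else 0)"

definition lin_comb :: "nat \<Rightarrow> (nat \<Rightarrow> int) \<Rightarrow> nat \<Rightarrow> real" where
  "lin_comb n a = (\<lambda>i. \<Sum>j<n. real_of_int (a j) * e_vec n j i)"

definition weight_lattice :: "nat \<Rightarrow> (nat \<Rightarrow> real) set" where
  "weight_lattice n = {y. \<exists>a. y = lin_comb n a}"

definition root_lattice :: "nat \<Rightarrow> (nat \<Rightarrow> real) set" where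
  "root_lattice n = {y. \<exists>a. (\<Sum>j<n. a j) mod int n = 0 \<and> y = lin_comb n a}"

definition dominant :: "nat \<Rightarrow> (nat \<Rightarrow> real) \<Rightarrow> bool" where
  "dominant n y \<longleftrightarrow> (\<forall>i j. i \<le> j \<longrightarrow> j < n \<longrightarrow> y j \<le> y i)"

definition weyl_orbit :: "nat \<Rightarrow> (nat \<Rightarrow> real) \<Rightarrow> (nat \<Rightarrow> real) set" where
  "weyl_orbit n y = {y \<circ> \<sigma> | \<sigma>. \<sigma> permutes {..<n}}"

definition conv_fin :: "(nat \<Rightarrow> real) set \<Rightarrow> (nat \<Rightarrow> real) set" where
  "conv_fin S = {x. \<exists>u. (\<forall>s\<in>S. 0 \<le> u s) \<and> (\<Sum>s\<in>S. u s) = 1 \<and>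
                        x = (\<lambda>i. \<Sum>s\<in>S. u s * s i)}"

definition M_set :: "nat \<Rightarrow> (nat \<Rightarrow> real) \<Rightarrow> (nat \<Rightarrow> real) set" where
  "M_set n y = conv_fin (weyl_orbit n y) \<inter> {x. \<exists>r\<in>root_lattice n. x = (\<lambda>i. y i + r i)}"

end

theory Submission imports Defs begin

(* The proof has three parts.
   1. M(lam) is closed under unit transfers x -> x - e_i + e_j whenever x i - x j >= 1: the
      new point is a convex combination of x and x o (i j), both in the convex hull of the
      Weyl orbit, and the shift e_j - e_i is a root.  Coordinate differences in M(lam) are
      integral.
   2. In any set with these two properties and without such triangles (locale
      unit_transfer_set, n >= 4) every vector has range at most 2, and two coordinates at
      distance 2 admit no coordinate strictly between them, and their two values cannot
      both be attained twice.
   3. Applied to lam: its range lies in (1, 2] and is integral, so it equals 2; lam takes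
      only two values, one of them exactly once, and the coordinate sum zero gives the two
      listed weights. *)

lemma lin_comb_eval:
  "lin_comb n a m = (if m < n then real_of_int (a m) - real_of_int (\<Sum>j<n. a j) / real n else 0)"
proof (cases "m < n")
  case True
  have "lin_comb n a m = (\<Sum>j<n. real_of_int (a j) * (if m = j then 1 else 0)) - (\<Sum>j<n. real_of_int (a j)) / real n"
    unfolding lin_comb_def e_vec_def using True
    by (simp add: right_diff_distrib sum_subtractf sum_divide_distrib mult_ac)
  also have "(\<Sum>j<n. real_of_int (a j) * (if m = j then 1 else 0)) = real_of_int (a m)"
    using True by (simp add: if_distrib sum.delta cong: if_cong)
  finally show ?thesis using True by simp
qed (simp add: lin_comb_def e_vec_def)

(* Moving one unit from coordinate i to coordinate j, i.e. adding the root e_j - e_i. *)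
definition transfer :: "(nat \<Rightarrow> real) \<Rightarrow> nat \<Rightarrow> nat \<Rightarrow> nat \<Rightarrow> real" where
  "transfer x i j = (\<lambda>k. x k - (if k = i then 1 else 0) + (if k = j then 1 else 0))"

lemma weight_lattice_coords:
  assumes "lam \<in> weight_lattice n"
  shows "\<And>k. n \<le> k \<Longrightarrow> lam k = 0"
    and "\<And>k l. k < n \<Longrightarrow> l < n \<Longrightarrow> lam k - lam l \<in> \<int>"
    and "0 < n \<Longrightarrow> (\<Sum>k<n. lam k) = 0"
proof -
  obtain a where a: "lam = lin_comb n a" using assms unfolding weight_lattice_def by auto
  show "\<And>k. n \<le> k \<Longrightarrow> lam k = 0" using a by (simp add: lin_comb_eval)
  show "\<And>k l. k < n \<Longrightarrow> l < n \<Longrightarrow> lam k - lam l \<in> \<int>" using a by (simp add: lin_comb_eval)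
  show "0 < n \<Longrightarrow> (\<Sum>k<n. lam k) = 0" using a by (simp add: lin_comb_eval sum_subtractf)
qed

lemma root_lattice_transfer:
  assumes "r \<in> root_lattice n" "i < n" "j < n"
  shows "transfer r i j \<in> root_lattice n"
proof -
  obtain a where a: "int n dvd (\<Sum>k<n. a k)" "r = lin_comb n a"
    using assms(1) unfolding root_lattice_def by auto
  define a' where "a' k = a k - (if k = i then 1 else 0) + (if k = j then 1 else 0)" for k
  have sum_eq: "(\<Sum>k<n. a' k) = (\<Sum>k<n. a k)"
    unfolding a'_def using assms(2,3) by (simp add: sum.distrib sum_subtractf)
  have "transfer r i j = lin_comb n a'"
    using assms(2,3) unfolding a(2) transfer_def by (auto simp: fun_eq_iff lin_comb_eval sum_eq; simp add: a'_def)
  thus ?thesis using a(1) sum_eq unfolding root_lattice_def by (auto intro!: exI[of _ a'])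
qed

lemma conv_fin_convex:
  assumes "x \<in> conv_fin S" "y \<in> conv_fin S" "0 \<le> t" "t \<le> 1"
  shows "(\<lambda>k. (1 - t) * x k + t * y k) \<in> conv_fin S"
proof -
  obtain u where u: "\<forall>s\<in>S. 0 \<le> u s" "(\<Sum>s\<in>S. u s) = 1" "x = (\<lambda>k. \<Sum>s\<in>S. u s * s k)"
    using assms(1) unfolding conv_fin_def by auto
  obtain v where v: "\<forall>s\<in>S. 0 \<le> v s" "(\<Sum>s\<in>S. v s) = 1" "y = (\<lambda>k. \<Sum>s\<in>S. v s * s k)"
    using assms(2) unfolding conv_fin_def by auto
  define w where "w s = (1 - t) * u s + t * v s" for s
  have "\<forall>s\<in>S. 0 \<le> w s" using u(1) v(1) assms(3,4) unfolding w_def by simp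
  moreover have "(\<Sum>s\<in>S. w s) = 1"
    using u(2) v(2) unfolding w_def by (simp add: sum.distrib flip: sum_distrib_left)
  moreover have "(\<lambda>k. (1 - t) * x k + t * y k) = (\<lambda>k. \<Sum>s\<in>S. w s * s k)"
    unfolding u(3) v(3) w_def by (simp add: fun_eq_iff distrib_right sum.distrib sum_distrib_left mult.assoc)
  ultimately show ?thesis unfolding conv_fin_def by blast
qed

lemma weyl_orbit_transpose:
  assumes "s \<in> weyl_orbit n y" "i < n" "j < n"
  shows "s \<circ> Transposition.transpose i j \<in> weyl_orbit n y"
proof -
  obtain \<sigma> where s: "s = y \<circ> \<sigma>" "\<sigma> permutes {..<n}"
    using assms(1) unfolding weyl_orbit_def by auto
  have "\<sigma> \<circ> Transposition.transpose i j permutes {..<n}"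
    by (rule permutes_compose[OF permutes_swap_id s(2)]) (use assms in auto)
  thus ?thesis unfolding weyl_orbit_def using s by (auto simp: comp_assoc)
qed

lemma conv_fin_weyl_orbit_transpose:
  assumes "x \<in> conv_fin (weyl_orbit n y)" "i < n" "j < n"
  shows "x \<circ> Transposition.transpose i j \<in> conv_fin (weyl_orbit n y)"
proof -
  let ?O = "weyl_orbit n y" and ?\<tau> = "Transposition.transpose i j"
  obtain u where u: "\<forall>s\<in>?O. 0 \<le> u s" "(\<Sum>s\<in>?O. u s) = 1" "x = (\<lambda>k. \<Sum>s\<in>?O. u s * s k)"
    using assms(1) unfolding conv_fin_def by auto
  have reindex: "(\<Sum>s\<in>?O. g (s \<circ> ?\<tau>)) = (\<Sum>s\<in>?O. g s)" for g :: "_ \<Rightarrow> real"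
    by (rule sum.reindex_bij_witness[where i="\<lambda>s. s \<circ> ?\<tau>" and j="\<lambda>s. s \<circ> ?\<tau>"])
       (auto simp: comp_assoc weyl_orbit_transpose assms(2,3))
  define w where "w s = u (s \<circ> ?\<tau>)" for s
  have "\<forall>s\<in>?O. 0 \<le> w s" using u(1) weyl_orbit_transpose assms(2,3) unfolding w_def by blast
  moreover have "(\<Sum>s\<in>?O. w s) = 1" using u(2) reindex[of u] unfolding w_def by simp
  moreover have "x \<circ> ?\<tau> = (\<lambda>k. \<Sum>s\<in>?O. w s * s k)"
  proof
    fix k
    have "(\<Sum>s\<in>?O. w s * s k) = (\<Sum>s\<in>?O. u ((s \<circ> ?\<tau>) \<circ> ?\<tau>) * (s \<circ> ?\<tau>) k)"
      using reindex[of "\<lambda>s. u (s \<circ> ?\<tau>) * s k"] unfolding w_def by simp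
    also have "\<dots> = (x \<circ> ?\<tau>) k" using u(3) by (simp add: comp_assoc)
    finally show "(x \<circ> ?\<tau>) k = (\<Sum>s\<in>?O. w s * s k)" ..
  qed
  ultimately show ?thesis unfolding conv_fin_def by blast
qed

lemma transfer_convex_combination:
  assumes "x i \<noteq> x j"
  defines "t \<equiv> 1 / (x i - x j)"
  shows "transfer x i j = (\<lambda>k. (1 - t) * x k + t * (x \<circ> Transposition.transpose i j) k)"
proof
  fix k
  have ij: "i \<noteq> j" and td: "t * (x i - x j) = 1" using assms by auto
  show "transfer x i j k = (1 - t) * x k + t * (x \<circ> Transposition.transpose i j) k"
    using ij td unfolding transfer_def
    by (cases "k = i"; cases "k = j") (auto simp: Transposition.transpose_def algebra_simps)
qed

lemma M_set_transfer:
  assumes "x \<in> M_set n lam" "i < n" "j < n" "x i - x j \<ge> 1"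
  shows "transfer x i j \<in> M_set n lam"
proof -
  let ?O = "weyl_orbit n lam"
  obtain r where r: "r \<in> root_lattice n" "x = (\<lambda>k. lam k + r k)"
    using assms(1) unfolding M_set_def by auto
  have x_hull: "x \<in> conv_fin ?O" using assms(1) unfolding M_set_def by auto
  have t: "0 \<le> 1 / (x i - x j)" "1 / (x i - x j) \<le> 1" using assms(4) by auto
  have "transfer x i j = (\<lambda>k. (1 - 1 / (x i - x j)) * x k
      + 1 / (x i - x j) * (x \<circ> Transposition.transpose i j) k)"
    by (rule transfer_convex_combination) (use assms(4) in auto)
  hence "transfer x i j \<in> conv_fin ?O"
    using conv_fin_convex[OF x_hull conv_fin_weyl_orbit_transpose[OF x_hull assms(2,3)] t] by simp
  moreover have "transfer x i j = (\<lambda>k. lam k + transfer r i j k)"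
    unfolding r(2) transfer_def by auto
  ultimately show ?thesis
    using root_lattice_transfer[OF r(1) assms(2,3)] unfolding M_set_def by blast
qed

lemma lam_in_M_set:
  assumes "lam \<in> weight_lattice n"
  shows "lam \<in> M_set n lam"
proof -
  let ?O = "weyl_orbit n lam" and ?u = "\<lambda>s. if s = lam then 1 else 0 :: real"
  have lam_O: "lam \<in> ?O" unfolding weyl_orbit_def
    by (rule CollectI, rule exI[of _ id]) (auto simp: permutes_id)
  have fin: "finite ?O"
    unfolding weyl_orbit_def using finite_permutations[of "{..<n}"] by (simp add: setcompr_eq_image)
  have "(\<Sum>s\<in>?O. ?u s * s k) = lam k" for k
  proof -
    have "(\<Sum>s\<in>?O. ?u s * s k) = (\<Sum>s\<in>?O. if s = lam then lam k else 0)"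
      by (rule sum.cong) auto
    thus ?thesis using fin lam_O by (simp add: sum.delta')
  qed
  moreover have "(\<Sum>s\<in>?O. ?u s) = 1" using fin lam_O by (simp add: sum.delta')
  ultimately have "lam \<in> conv_fin ?O"
    unfolding conv_fin_def by (intro CollectI exI[of _ ?u]) (auto simp: fun_eq_iff)
  moreover have "(\<lambda>_. 0) \<in> root_lattice n"
    unfolding root_lattice_def by (auto intro!: exI[of _ "\<lambda>_. 0"] simp: lin_comb_eval fun_eq_iff)
  ultimately show ?thesis unfolding M_set_def by (auto intro!: bexI[of _ "\<lambda>_. 0"])
qed

lemma M_set_integral_differences:
  assumes "x \<in> M_set n lam" "lam \<in> weight_lattice n" "k < n" "l < n"
  shows "x k - x l \<in> \<int>"
proof -
  obtain a where "x = (\<lambda>k. lam k + lin_comb n a k)"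
    using assms(1) unfolding M_set_def root_lattice_def by auto
  hence "x k - x l = (lam k - lam l) + (of_int (a k) - of_int (a l))"
    using assms(3,4) by (simp add: lin_comb_eval)
  thus ?thesis using weight_lattice_coords(2)[OF assms(2,3,4)] by simp
qed

(* A transfer from i to j changes the sum of squares by 2 - 2 (x i - x j); it is the
   termination measure for the range bound below. *)
lemma transfer_sum_squares:
  assumes "i < n" "j < n" "i \<noteq> j"
  shows "(\<Sum>k<n. (transfer x i j k)\<^sup>2) = (\<Sum>k<n. (x k)\<^sup>2) - 2 * (x i - x j) + 2"
proof -
  have "(\<Sum>k<n. (transfer x i j k)\<^sup>2) = (\<Sum>k<n. (x k)\<^sup>2 + (if k = i then 1 - 2 * x i else 0)
      + (if k = j then 1 + 2 * x j else 0))"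
    by (rule sum.cong) (auto simp: transfer_def power2_eq_square algebra_simps assms(3))
  also have "\<dots> = (\<Sum>k<n. (x k)\<^sup>2) - 2 * (x i - x j) + 2"
    using assms by (simp add: sum.distrib)
  finally show ?thesis .
qed

lemma extremal_coordinates:
  fixes x :: "nat \<Rightarrow> real"
  assumes "0 < n"
  obtains i j where "i < n" "j < n" "\<And>k. k < n \<Longrightarrow> x j \<le> x k \<and> x k \<le> x i"
proof -
  have fin: "finite (x ` {..<n})" "x ` {..<n} \<noteq> {}" using assms by auto
  obtain i where "i < n" "x i = Max (x ` {..<n})" using Max_in[OF fin] by auto
  moreover obtain j where "j < n" "x j = Min (x ` {..<n})" using Min_in[OF fin] by auto
  ultimately show ?thesis using that fin(1) by auto
qed

lemma two_other_indices:
  assumes "4 \<le> n"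
  obtains k l :: nat where "k < n" "l < n" "k \<noteq> i" "k \<noteq> j" "l \<noteq> i" "l \<noteq> j" "l \<noteq> k"
proof -
  have "\<exists>k::nat. k < 3 \<and> k \<noteq> i \<and> k \<noteq> j" by presburger
  then obtain k :: nat where k: "k < 3" "k \<noteq> i" "k \<noteq> j" by blast
  have "\<exists>l::nat. l < 4 \<and> l \<noteq> i \<and> l \<noteq> j \<and> l \<noteq> k" by presburger
  then obtain l :: nat where "l < 4" "l \<noteq> i" "l \<noteq> j" "l \<noteq> k" by blast
  thus ?thesis using that[of k l] k assms by simp
qed

locale unit_transfer_set =
  fixes n :: nat and G :: "(nat \<Rightarrow> real) set"
  assumes four_le_n: "4 \<le> n"
    and transfer_closed: "\<lbrakk>x \<in> G; i < n; j < n; x i - x j \<ge> 1\<rbrakk> \<Longrightarrow> transfer x i j \<in> G"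
    and integral_differences: "\<lbrakk>x \<in> G; k < n; l < n\<rbrakk> \<Longrightarrow> x k - x l \<in> \<int>"
    and triangle_free: "\<lbrakk>x \<in> G; a < n; b < n; c < n; x a = x b + 1; x c = x b - 1\<rbrakk> \<Longrightarrow> False"
begin

lemma integral_offset:
  assumes "x \<in> G" "k < n" "l < n"
  obtains z :: int where "x k = x l + of_int z"
  using integral_differences[OF assms] by (metis Ints_cases add.commute diff_add_cancel)

(* Two coordinates at distance 3, with two further coordinates between them, always
   lead to a triangle after at most one transfer. *)
lemma range_three_impossible:
  assumes x: "x \<in> G" and idx: "i < n" "j < n" "k < n" "l < n"
    and distinct: "k \<noteq> i" "k \<noteq> j" "l \<noteq> i" "l \<noteq> j" "l \<noteq> k"
    and xi: "x i = x j + 3" and xk: "x k = x j + of_int a" and xl: "x l = x j + of_int b"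
    and bounds: "0 \<le> a" "a \<le> 3" "0 \<le> b" "b \<le> 3"
  shows False
proof -
  have ij: "i \<noteq> j" using xi by auto
  let ?y = "transfer x i j"
  have y: "?y \<in> G" using transfer_closed[OF x idx(1,2)] xi by simp
  have yv: "?y i = x j + 2" "?y j = x j + 1" "?y k = x k" "?y l = x l"
    using ij distinct xi by (auto simp: transfer_def)
  have "a = 0 \<or> a = 1 \<or> a = 2 \<or> a = 3" "b = 0 \<or> b = 1 \<or> b = 2 \<or> b = 3"
    using bounds by linarith+
  then consider "a = 0" | "b = 0" | "a = 3" | "b = 3" | "a = 1" "b = 2" | "a = 2" "b = 1"
    | "a = 1" "b = 1" | "a = 2" "b = 2"
    by blast
  then show False
  proof cases
    case 1 show False by (rule triangle_free[OF y idx(1,2,3)]) (use yv xk 1 in simp_all)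
  next
    case 2 show False by (rule triangle_free[OF y idx(1,2,4)]) (use yv xl 2 in simp_all)
  next
    case 3 show False by (rule triangle_free[OF y idx(3,1,2)]) (use yv xk 3 in simp_all)
  next
    case 4 show False by (rule triangle_free[OF y idx(4,1,2)]) (use yv xl 4 in simp_all)
  next
    case 5 show False by (rule triangle_free[OF x idx(4,3,2)]) (use xk xl 5 in simp_all)
  next
    case 6 show False by (rule triangle_free[OF x idx(3,4,2)]) (use xk xl 6 in simp_all)
  next
    case 7
    have z: "transfer x i k \<in> G" using transfer_closed[OF x idx(1,3)] xi xk 7 by simp
    show False by (rule triangle_free[OF z idx(1,4,2)]) (use distinct ij xi xk xl 7 in \<open>simp_all add: transfer_def\<close>)
  next
    case 8
    have z: "transfer x k j \<in> G" using transfer_closed[OF x idx(3,2)] xk 8 by simp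
    show False by (rule triangle_free[OF z idx(1,4,2)]) (use distinct ij xi xk xl 8 in \<open>simp_all add: transfer_def\<close>)
  qed
qed

(* Likewise for distance 4, when the two further coordinates are at distance 1..3
   above the minimum (the situation left after one transfer by the induction below). *)
lemma range_four_impossible:
  assumes x: "x \<in> G" and idx: "i < n" "j < n" "k < n" "l < n"
    and distinct: "k \<noteq> i" "k \<noteq> j" "l \<noteq> i" "l \<noteq> j" "l \<noteq> k"
    and xi: "x i = x j + 4" and xk: "x k = x j + of_int a" and xl: "x l = x j + of_int b"
    and bounds: "1 \<le> a" "a \<le> 3" "1 \<le> b" "b \<le> 3"
  shows False
proof -
  have ij: "i \<noteq> j" using xi by auto
  let ?y = "transfer x i j"
  have y: "?y \<in> G" using transfer_closed[OF x idx(1,2)] xi by simp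
  have yv: "?y i = x j + 3" "?y j = x j + 1" "?y k = x k" "?y l = x l"
    using ij distinct xi by (auto simp: transfer_def)
  have "a = 1 \<or> a = 2 \<or> a = 3" "b = 1 \<or> b = 2 \<or> b = 3"
    using bounds by linarith+
  then consider "a = 2" | "b = 2" | "a = 1" "b = 1" | "a = 3" "b = 3" | "a = 1" "b = 3" | "a = 3" "b = 1"
    by blast
  then show False
  proof cases
    case 1 show False by (rule triangle_free[OF y idx(1,3,2)]) (use yv xk 1 in simp_all)
  next
    case 2 show False by (rule triangle_free[OF y idx(1,4,2)]) (use yv xl 2 in simp_all)
  next
    case 3
    have z: "transfer x i k \<in> G" using transfer_closed[OF x idx(1,3)] xi xk 3 by simp
    show False by (rule triangle_free[OF z idx(3,4,2)]) (use distinct ij xi xk xl 3 in \<open>simp_all add: transfer_def\<close>)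
  next
    case 4
    have z: "transfer x k j \<in> G" using transfer_closed[OF x idx(3,2)] xk 4 by simp
    show False by (rule triangle_free[OF z idx(4,3,2)]) (use distinct ij xi xk xl 4 in \<open>simp_all add: transfer_def\<close>)
  next
    case 5
    have z: "transfer ?y l k \<in> G" using transfer_closed[OF y idx(4,3)] yv xk xl 5 by simp
    show False by (rule triangle_free[OF z idx(1,3,2)]) (use distinct ij xi xk xl 5 in \<open>simp_all add: transfer_def\<close>)
  next
    case 6
    have z: "transfer ?y k l \<in> G" using transfer_closed[OF y idx(3,4)] yv xk xl 6 by simp
    show False by (rule triangle_free[OF z idx(1,4,2)]) (use distinct ij xi xk xl 6 in \<open>simp_all add: transfer_def\<close>)
  qed
qed

(* Main combinatorial fact: every vector of the set has range at most 2.  By induction on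
   the sum of squares: transferring from a maximal to a minimal coordinate gives a
   vector of range at most 2, forcing the original range to be 3 or 4. *)
lemma range_at_most_two:
  assumes "x \<in> G" "p < n" "q < n"
  shows "x p - x q \<le> 2"
  using assms
proof (induction "nat \<lceil>\<Sum>k<n. (x k)\<^sup>2\<rceil>" arbitrary: x p q rule: less_induct)
  case less
  note x = \<open>x \<in> G\<close>
  obtain i j where idx: "i < n" "j < n" and ext: "\<And>k. k < n \<Longrightarrow> x j \<le> x k \<and> x k \<le> x i"
    using extremal_coordinates[of n x] four_le_n by auto
  show ?case
  proof (rule ccontr)
    assume "\<not> x p - x q \<le> 2"
    hence wide: "x i - x j > 2" using ext[OF less.prems(2)] ext[OF less.prems(3)] by linarith
    obtain d where d: "x i = x j + of_int d" using integral_offset[OF x idx] .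
    have ij: "i \<noteq> j" and d3: "3 \<le> d" using wide d by auto
    hence gap: "3 \<le> x i - x j" using d by simp
    let ?y = "transfer x i j"
    have y: "?y \<in> G" using transfer_closed[OF x idx] wide by simp
    have "(\<Sum>k<n. (?y k)\<^sup>2) \<le> (\<Sum>k<n. (x k)\<^sup>2) - 4"
      unfolding transfer_sum_squares[OF idx ij] using gap by simp
    moreover have "0 \<le> (\<Sum>k<n. (?y k)\<^sup>2)" by (rule sum_nonneg) simp
    ultimately have "nat \<lceil>\<Sum>k<n. (?y k)\<^sup>2\<rceil> < nat \<lceil>\<Sum>k<n. (x k)\<^sup>2\<rceil>" by linarith
    hence y_range: "\<And>k l. k < n \<Longrightarrow> l < n \<Longrightarrow> ?y k - ?y l \<le> 2"
      using less.hyps y by blast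
    obtain k l where kl: "k < n" "l < n" and distinct: "k \<noteq> i" "k \<noteq> j" "l \<noteq> i" "l \<noteq> j" "l \<noteq> k"
      using two_other_indices[OF four_le_n] by blast
    obtain a where a: "x k = x j + of_int a" using integral_offset[OF x kl(1) idx(2)] .
    obtain b where b: "x l = x j + of_int b" using integral_offset[OF x kl(2) idx(2)] .
    have y_vals: "?y i = x i - 1" "?y j = x j + 1" "?y k = x k" "?y l = x l"
      using ij distinct by (auto simp: transfer_def)
    have "d \<le> 4" using y_range[OF idx] y_vals d by simp
    then consider "d = 3" | "d = 4" using d3 by linarith
    then show False
    proof cases
      case 1
      have "0 \<le> a" "a \<le> 3" "0 \<le> b" "b \<le> 3"
        using ext[OF kl(1)] ext[OF kl(2)] a b d 1 by simp_all
      thus False using range_three_impossible[OF x idx kl distinct _ a b] d 1 by simp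
    next
      case 2
      have "1 \<le> a" "a \<le> 3" "1 \<le> b" "b \<le> 3"
        using y_range[OF idx(1) kl(1)] y_range[OF kl(1) idx(2)]
          y_range[OF idx(1) kl(2)] y_range[OF kl(2) idx(2)] y_vals a b d 2 by simp_all
      thus False using range_four_impossible[OF x idx kl distinct _ a b] d 2 by simp
    qed
  qed
qed

lemma no_midpoint:
  assumes x: "x \<in> G" and idx: "p < n" "q < n" "k < n"
    and gap: "x p = x q + 2" and between: "x q \<le> x k" "x k \<le> x p"
  shows "x k = x q \<or> x k = x p"
proof -
  obtain w where w: "x k = x q + of_int w" using integral_offset[OF x idx(3,2)] .
  have "0 \<le> w" "w \<le> 2" using between gap w by simp_all
  moreover have "w \<noteq> 1"
  proof
    assume "w = 1"
    show False by (rule triangle_free[OF x idx(1,3,2)]) (use gap w \<open>w = 1\<close> in simp_all)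
  qed
  ultimately have "w = 0 \<or> w = 2" by linarith
  thus ?thesis using w gap by auto
qed

(* Two coordinates on the top value and two on the bottom value, at distance 2, are
   impossible: one transfer produces a triangle. *)
lemma no_double_gap:
  assumes x: "x \<in> G" and idx: "p < n" "p' < n" "q < n" "q' < n"
    and distinct: "p' \<noteq> p" "q' \<noteq> q"
    and vals: "x p' = x p" "x q' = x q" "x p = x q + 2"
  shows False
proof -
  have ne: "p \<noteq> q" "p \<noteq> q'" "p' \<noteq> q" "p' \<noteq> q'" using vals by auto
  have z: "transfer x p q \<in> G" using transfer_closed[OF x idx(1,3)] vals by simp
  show False
    by (rule triangle_free[OF z idx(2,1,4)]) (use distinct ne vals in \<open>simp_all add: transfer_def\<close>)
qed

end

lemma nonintegral_weight_spread:
  assumes n: "0 < n" and lam: "lam \<in> weight_lattice n" and dom: "dominant n lam"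
    and nonint: "\<forall>i<n. lam i \<notin> \<int>" and large: "\<exists>i<n. \<bar>lam i\<bar> > 1"
  shows "1 < lam 0 - lam (n - 1)"
proof (rule ccontr)
  assume "\<not> 1 < lam 0 - lam (n - 1)"
  hence narrow: "lam 0 \<le> lam (n - 1) + 1" by simp
  have bounds: "lam (n - 1) \<le> lam k \<and> lam k \<le> lam 0" if "k < n" for k
    using dom that unfolding dominant_def by simp
  have sum0: "(\<Sum>k<n. lam k) = 0" using weight_lattice_coords(3)[OF lam n] .
  have "real n * lam (n - 1) \<le> 0"
    using sum_mono[of "{..<n}" "\<lambda>_. lam (n - 1)" lam] bounds sum0 by simp
  hence low: "lam (n - 1) \<le> 0" using n by (simp add: mult_le_0_iff)
  have "0 \<le> real n * lam 0"
    using sum_mono[of "{..<n}" lam "\<lambda>_. lam 0"] bounds sum0 by simp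
  hence high: "0 \<le> lam 0" using n by (simp add: zero_le_mult_iff)
  have "lam (n - 1) \<notin> \<int>" using nonint n by simp
  hence "lam (n - 1) \<noteq> 0" "lam (n - 1) \<noteq> -1" by auto
  hence "-1 < lam (n - 1)" "lam (n - 1) < 0" using low high narrow by auto
  thus False using large bounds narrow by force
qed

lemma dominant_block_shape:
  assumes dom: "dominant n lam" and n: "2 \<le> n"
    and "lam 1 = lam (n - 1) \<or> lam (n - 2) = lam 0"
  shows "(\<forall>k. 0 < k \<and> k < n \<longrightarrow> lam k = lam (n - 1)) \<or> (\<forall>k < n - 1. lam k = lam 0)"
proof -
  have mono: "lam j \<le> lam i" if "i \<le> j" "j < n" for i j
    using dom that unfolding dominant_def by blast
  show ?thesis
    using assms(3)
  proof
    assume "lam 1 = lam (n - 1)"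
    hence "lam k = lam (n - 1)" if "0 < k" "k < n" for k
      using mono[of 1 k] mono[of k "n - 1"] that by simp
    thus ?thesis by blast
  next
    assume "lam (n - 2) = lam 0"
    moreover have "lam k \<le> lam 0" "lam (n - 2) \<le> lam k" if "k < n - 1" for k
      using mono[of 0 k] mono[of k "n - 2"] that by simp_all
    ultimately have "lam k = lam 0" if "k < n - 1" for k
      using that by fastforce
    thus ?thesis by blast
  qed
qed

lemma weight_single_top_entry:
  assumes n: "0 < n" and lam: "lam \<in> weight_lattice n"
    and rest: "\<forall>k. 0 < k \<and> k < n \<longrightarrow> lam k = lam 0 - 2"
  shows "lam = (\<lambda>i. if i = 0 then (2 * real n - 2) / real n else if i < n then - 2 / real n else 0)"
proof -
  have "(\<Sum>k<n. lam k) = (\<Sum>k<n. (lam 0 - 2) + (if k = 0 then 2 else 0))"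
    by (rule sum.cong) (auto simp: rest)
  hence "real n * (lam 0 - 2) + 2 = 0" using n weight_lattice_coords(3)[OF lam n] by (simp add: sum.distrib)
  hence top: "lam 0 = (2 * real n - 2) / real n" using n by (simp add: field_simps)
  have "(2 * real n - 2) / real n - 2 = - 2 / real n" using n by (simp add: field_simps)
  thus ?thesis using top rest weight_lattice_coords(1)[OF lam] by (auto simp: fun_eq_iff)
qed

lemma weight_single_bottom_entry:
  assumes n: "0 < n" and lam: "lam \<in> weight_lattice n"
    and rest: "\<forall>k < n - 1. lam k = lam (n - 1) + 2"
  shows "lam = (\<lambda>i. if i < n - 1 then 2 / real n
                    else if i = n - 1 then - (2 * real n - 2) / real n else 0)"
proof -
  have "(\<Sum>k<n. lam k) = (\<Sum>k<n. (lam (n - 1) + 2) - (if k = n - 1 then 2 else 0))"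
    by (rule sum.cong) (auto simp: rest)
  hence "real n * (lam (n - 1) + 2) - 2 = 0" using n weight_lattice_coords(3)[OF lam n] by (simp add: sum_subtractf)
  hence bottom: "lam (n - 1) = - (2 * real n - 2) / real n" using n by (simp add: field_simps)
  have "- (2 * real n - 2) / real n + 2 = 2 / real n" using n by (simp add: field_simps)
  thus ?thesis using bottom rest weight_lattice_coords(1)[OF lam] by (auto simp: fun_eq_iff)
qed

theorem lemma10:
  fixes n :: nat and lam :: "nat \<Rightarrow> real"
  assumes "n \<ge> 4"
    and "lam \<in> weight_lattice n"
    and "dominant n lam"
    and "\<forall>i<n. lam i \<notin> \<int>"
    and "\<exists>i<n. \<bar>lam i\<bar> > 1"
    and "\<not> (\<exists>x\<in>M_set n lam. \<exists>\<alpha>::real. \<exists>i<n. \<exists>j<n. \<exists>k<n.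
              x i = \<alpha> + 1 \<and> x j = \<alpha> \<and> x k = \<alpha> - 1)"
  shows "lam = (\<lambda>i. if i = 0 then (2 * real n - 2) / real n
                    else if i < n then - 2 / real n else 0)
       \<or> lam = (\<lambda>i. if i < n - 1 then 2 / real n
                    else if i = n - 1 then - (2 * real n - 2) / real n else 0)"
proof -
  interpret M: unit_transfer_set n "M_set n lam"
  proof
    show "\<And>x a b c. \<lbrakk>x \<in> M_set n lam; a < n; b < n; c < n; x a = x b + 1; x c = x b - 1\<rbrakk> \<Longrightarrow> False"
      using assms(6) by blast
  qed (use assms(1,2) M_set_transfer M_set_integral_differences in auto)
  have n: "0 < n" and lam_M: "lam \<in> M_set n lam" using assms(1) lam_in_M_set[OF assms(2)] by auto
  have last: "n - 1 < n" using n by simp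
  obtain z where z: "lam 0 = lam (n - 1) + of_int z" using M.integral_offset[OF lam_M n last] .
  have "1 < z" "z \<le> 2"
    using nonintegral_weight_spread[OF n assms(2-5)] M.range_at_most_two[OF lam_M n last] z by simp_all
  hence spread: "lam 0 = lam (n - 1) + 2" using z by simp
  have bounds: "lam (n - 1) \<le> lam k" "lam k \<le> lam 0" if "k < n" for k
    using assms(3) that unfolding dominant_def by simp_all
  have two_valued: "lam k = lam (n - 1) \<or> lam k = lam 0" if "k < n" for k
    using M.no_midpoint[OF lam_M n last that spread bounds[OF that]] .
  have "lam 1 = lam (n - 1) \<or> lam (n - 2) = lam 0"
    using two_valued[of 1] two_valued[of "n - 2"] assms(1)
      M.no_double_gap[OF lam_M n, of 1 "n - 1" "n - 2"] spread by fastforce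
  from dominant_block_shape[OF assms(3) _ this] assms(1) show ?thesis
    using weight_single_top_entry[OF n assms(2)] weight_single_bottom_entry[OF n assms(2)] spread by auto
qed

end
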